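(* Let $X$ be a Tychonoff topological space which has a complete sequence $(\mathcal D_n)_{n\in\mathbb N}$ of covers such that each $\mathcal D_n$ is countable, disjoint, and consists of $F_\sigma$ subsets of $X$. Then $X$ is absolutely $F_{\sigma\delta}$, i.e. $X$ is an $F_{\sigma\delta}$ subset of $cX$ for every compactification $cX$ of $X$.
   Context: A filter on $X$ is a nonempty family of subsets of $X$ closed under supersets and finite intersections and not containing $\emptyset$. A point $x\in X$ is an accumulation point of a filter $\mathcal F$ if every neighborhood of $x$ meets every element of $\mathcal F$. A sequence $(\mathcal F_n)_{n\in\mathbb N}$ of covers of $X$ is complete if every filter on $X$ which intersects each $\mathcal F_n$ (i.e. contains some element of $\mathcal F_n$ for each $n$) has an accumulation point in $X$. A cover is disjoint if its elements are pairwise disjoint, countable if it has countably many elements, and $F_\sigma$ if its elements are $F_\sigma$ subsets of $X$. A compactification of $X$ is a compact (Hausdorff) space $cX$ together with a homeomorphic embedding of $X$ onto a dense subspace of $cX$; we identify $X$ with its image. *)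

theory Defs
  imports "HOL-Analysis.Analysis"
begin

definition filter_on :: "'a topology \<Rightarrow> 'a set set \<Rightarrow> bool" where
  "filter_on X \<F> \<longleftrightarrow>
     \<F> \<noteq> {} \<and> (\<forall>A\<in>\<F>. A \<subseteq> topspace X) \<and> {} \<notin> \<F> \<and>
     (\<forall>A B. A \<in> \<F> \<and> A \<subseteq> B \<and> B \<subseteq> topspace X \<longrightarrow> B \<in> \<F>) \<and>
     (\<forall>A B. A \<in> \<F> \<and> B \<in> \<F> \<longrightarrow> A \<inter> B \<in> \<F>)"

definition accumulation_point_of_filter :: "'a topology \<Rightarrow> 'a set set \<Rightarrow> 'a \<Rightarrow> bool" where
  "accumulation_point_of_filter X \<F> x \<longleftrightarrow>
     x \<in> topspace X \<and> (\<forall>U A. openin X U \<and> x \<in> U \<and> A \<in> \<F> \<longrightarrow> U \<inter> A \<noteq> {})"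

definition cover_of :: "'a topology \<Rightarrow> 'a set set \<Rightarrow> bool" where
  "cover_of X \<C> \<longleftrightarrow> (\<forall>C\<in>\<C>. C \<subseteq> topspace X) \<and> \<Union>\<C> = topspace X"

definition complete_sequence :: "'a topology \<Rightarrow> (nat \<Rightarrow> 'a set set) \<Rightarrow> bool" where
  "complete_sequence X \<D> \<longleftrightarrow>
     (\<forall>n. cover_of X (\<D> n)) \<and>
     (\<forall>\<F>. filter_on X \<F> \<and> (\<forall>n. \<F> \<inter> \<D> n \<noteq> {}) \<longrightarrow>
          (\<exists>x\<in>topspace X. accumulation_point_of_filter X \<F> x))"

definition tychonoff_space :: "'a topology \<Rightarrow> bool" where
  "tychonoff_space X \<longleftrightarrow> completely_regular_space X \<and> Hausdorff_space X"

definition fsigma_delta_in :: "'a topology \<Rightarrow> 'a set \<Rightarrow> bool" where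
  "fsigma_delta_in X S \<longleftrightarrow> (\<exists>A :: nat \<Rightarrow> 'a set. (\<forall>n. fsigma_in X (A n)) \<and> (\<Inter>n. A n) = S)"

definition compactification :: "'a topology \<Rightarrow> 'b topology \<Rightarrow> ('a \<Rightarrow> 'b) \<Rightarrow> bool" where
  "compactification X C e \<longleftrightarrow>
     compact_space C \<and> Hausdorff_space C \<and> embedding_map X C e \<and>
     C closure_of (e ` topspace X) = topspace C"

end

theory Submission
  imports Defs
begin

text \<open>
  Splitting every member of \<open>\<D> n\<close> into countably many closed pieces and intersecting pieces along
  finite initial segments gives countable closed covers \<open>\<P> n\<close> of \<open>X\<close>, each member of \<open>\<P> n\<close> lying
  in a member of \<open>\<D> i\<close> for all \<open>i < n\<close>. In a compactification, \<open>X\<close> lies in the \<open>F\<^sub>\<sigma>\<close> sets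
  \<open>A n = \<Union>P\<in>\<P> n. cl P\<close>; and since \<open>X\<close> is Lindelof, for every disjoint pair \<open>P, P'\<close> of pieces
  (whose closures can only meet outside \<open>X\<close>) some \<open>F\<^sub>\<sigma>\<close> set containing \<open>X\<close> misses
  \<open>cl P \<inter> cl P'\<close>. These countably many \<open>F\<^sub>\<sigma>\<close> sets intersect exactly in \<open>X\<close>: a point \<open>y\<close> of the
  intersection lies in closures of pairwise meeting pieces \<open>P\<^sub>n \<in> \<P> n\<close>, which by disjointness of
  the \<open>\<D> i\<close> single out a chain \<open>D\<^sub>0, D\<^sub>1, \<dots>\<close>; completeness, applied to the filter generated by
  the sets \<open>D\<^sub>0 \<inter> \<dots> \<inter> D\<^sub>n\<close> and the traces of the neighbourhoods of \<open>y\<close>, gives a point of \<open>X\<close>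
  that the Hausdorff property forces onto \<open>y\<close>.
\<close>

lemma filter_on_upward_closure:
  assumes "\<B> \<noteq> {}" "\<And>B. B \<in> \<B> \<Longrightarrow> B \<subseteq> topspace X" "{} \<notin> \<B>"
    and "\<And>A B. A \<in> \<B> \<Longrightarrow> B \<in> \<B> \<Longrightarrow> \<exists>C\<in>\<B>. C \<subseteq> A \<inter> B"
  shows "filter_on X {A. A \<subseteq> topspace X \<and> (\<exists>B\<in>\<B>. B \<subseteq> A)}"
  unfolding filter_on_def
proof (intro conjI allI impI ballI)
  show "{A. A \<subseteq> topspace X \<and> (\<exists>B\<in>\<B>. B \<subseteq> A)} \<noteq> {}"
    using assms(1,2) by blast
  show "A \<inter> B \<in> {A. A \<subseteq> topspace X \<and> (\<exists>B\<in>\<B>. B \<subseteq> A)}"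
    if "A \<in> {A. A \<subseteq> topspace X \<and> (\<exists>B\<in>\<B>. B \<subseteq> A)} \<and> B \<in> {A. A \<subseteq> topspace X \<and> (\<exists>B\<in>\<B>. B \<subseteq> A)}" for A B
    using that assms(4) by (simp add: subset_iff) (metis Int_iff)
qed (use assms(3) in auto)

lemma complete_sequence_filter_base_cluster:
  assumes "complete_sequence X \<D>"
    and "\<B> \<noteq> {}" "\<And>B. B \<in> \<B> \<Longrightarrow> B \<subseteq> topspace X" "{} \<notin> \<B>"
    and "\<And>A B. A \<in> \<B> \<Longrightarrow> B \<in> \<B> \<Longrightarrow> \<exists>C\<in>\<B>. C \<subseteq> A \<inter> B"
    and "\<And>n. \<exists>D\<in>\<D> n. \<exists>B\<in>\<B>. B \<subseteq> D"
  shows "\<exists>x\<in>topspace X. \<forall>U B. openin X U \<and> x \<in> U \<and> B \<in> \<B> \<longrightarrow> U \<inter> B \<noteq> {}"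
proof -
  define \<F> where "\<F> = {A. A \<subseteq> topspace X \<and> (\<exists>B\<in>\<B>. B \<subseteq> A)}"
  have "filter_on X \<F>"
    unfolding \<F>_def using assms(2-5) by (rule filter_on_upward_closure)
  moreover have "\<F> \<inter> \<D> n \<noteq> {}" for n
  proof -
    obtain D B where "D \<in> \<D> n" "B \<in> \<B>" "B \<subseteq> D"
      using assms(6) by blast
    moreover have "D \<subseteq> topspace X"
      using assms(1) \<open>D \<in> \<D> n\<close> by (auto simp: complete_sequence_def cover_of_def)
    ultimately show ?thesis
      unfolding \<F>_def by blast
  qed
  ultimately obtain x where "x \<in> topspace X" "accumulation_point_of_filter X \<F> x"
    using assms(1) by (auto simp: complete_sequence_def)
  moreover have "\<B> \<subseteq> \<F>"
    using assms(3) by (auto simp: \<F>_def)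
  ultimately show ?thesis
    unfolding accumulation_point_of_filter_def by blast
qed

lemma complete_sequence_nested_cluster:
  assumes comp: "complete_sequence X \<D>"
    and S: "decseq S" "\<And>n. S n \<subseteq> topspace X" "\<And>n. \<exists>D\<in>\<D> n. S (Suc n) \<subseteq> D"
    and \<N>: "\<N> \<noteq> {}" "\<And>A B. A \<in> \<N> \<Longrightarrow> B \<in> \<N> \<Longrightarrow> A \<inter> B \<in> \<N>"
      "\<And>n N. N \<in> \<N> \<Longrightarrow> S n \<inter> N \<noteq> {}"
  obtains x where "x \<in> topspace X" "\<And>U n N. openin X U \<Longrightarrow> x \<in> U \<Longrightarrow> N \<in> \<N> \<Longrightarrow> U \<inter> (S n \<inter> N) \<noteq> {}"
proof -
  define \<B> where "\<B> = {S n \<inter> N | n N. N \<in> \<N>}"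
  have \<B>I: "S n \<inter> N \<in> \<B>" if "N \<in> \<N>" for n N
    unfolding \<B>_def using that by blast
  obtain N0 where "N0 \<in> \<N>"
    using \<N>(1) by blast
  have "\<exists>x\<in>topspace X. \<forall>U B. openin X U \<and> x \<in> U \<and> B \<in> \<B> \<longrightarrow> U \<inter> B \<noteq> {}"
  proof (rule complete_sequence_filter_base_cluster[OF comp])
    show "\<B> \<noteq> {}"
      using \<B>I[OF \<open>N0 \<in> \<N>\<close>] by blast
    show "B \<subseteq> topspace X" if "B \<in> \<B>" for B
      using that S(2) unfolding \<B>_def by blast
    show "{} \<notin> \<B>"
      using \<N>(3) unfolding \<B>_def by blast
    show "\<exists>C\<in>\<B>. C \<subseteq> A \<inter> B" if "A \<in> \<B>" "B \<in> \<B>" for A B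
    proof -
      obtain n N where "A = S n \<inter> N" "N \<in> \<N>"
        using \<open>A \<in> \<B>\<close> unfolding \<B>_def by blast
      moreover obtain m M where "B = S m \<inter> M" "M \<in> \<N>"
        using \<open>B \<in> \<B>\<close> unfolding \<B>_def by blast
      moreover have "S (max n m) \<subseteq> S n \<inter> S m"
        using decseqD[OF S(1)] by simp
      ultimately have "S (max n m) \<inter> (N \<inter> M) \<in> \<B>" "S (max n m) \<inter> (N \<inter> M) \<subseteq> A \<inter> B"
        using \<B>I \<N>(2) by blast+
      then show ?thesis
        by blast
    qed
    show "\<exists>D\<in>\<D> n. \<exists>B\<in>\<B>. B \<subseteq> D" for n
      using S(3)[of n] \<B>I[OF \<open>N0 \<in> \<N>\<close>, of "Suc n"] by blast
  qed
  then obtain x where "x \<in> topspace X"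
    and x: "\<And>U B. openin X U \<Longrightarrow> x \<in> U \<Longrightarrow> B \<in> \<B> \<Longrightarrow> U \<inter> B \<noteq> {}"
    by blast
  show thesis
  proof (rule that)
    show "x \<in> topspace X"
      by fact
    show "U \<inter> (S n \<inter> N) \<noteq> {}" if "openin X U" "x \<in> U" "N \<in> \<N>" for U n N
      using x[OF that(1,2) \<B>I[OF that(3)]] .
  qed
qed

lemma countable_subcover_of_countable_pieces:
  assumes "countable \<D>" "S \<subseteq> \<Union>\<D>"
    and "\<And>D. D \<in> \<D> \<Longrightarrow> \<exists>\<V>. countable \<V> \<and> \<V> \<subseteq> \<U> \<and> S \<inter> D \<subseteq> \<Union>\<V>"
  shows "\<exists>\<V>. countable \<V> \<and> \<V> \<subseteq> \<U> \<and> S \<subseteq> \<Union>\<V>"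
proof -
  obtain g where g: "\<And>D. D \<in> \<D> \<Longrightarrow> countable (g D) \<and> g D \<subseteq> \<U> \<and> S \<inter> D \<subseteq> \<Union>(g D)"
    using assms(3) by metis
  have "countable (\<Union>(g ` \<D>))"
    using g assms(1) by (intro countable_UN) auto
  moreover have "\<Union>(g ` \<D>) \<subseteq> \<U>"
    using g by blast
  moreover have "S \<subseteq> \<Union>(\<Union>(g ` \<D>))"
    using assms(2) g by blast
  ultimately show ?thesis
    by blast
qed

lemma not_countably_covered_nested_sequence:
  fixes \<D> :: "nat \<Rightarrow> 'a set set"
  assumes cnt: "\<And>n. countable (\<D> n)" and cover: "\<And>n. T \<subseteq> \<Union>(\<D> n)"
    and big: "\<nexists>\<V>. countable \<V> \<and> \<V> \<subseteq> \<U> \<and> T \<subseteq> \<Union>\<V>"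
  obtains S where "decseq S" "\<And>n. S n \<subseteq> T" "\<And>n. \<exists>D\<in>\<D> n. S (Suc n) \<subseteq> D"
    "\<And>n \<V>. countable \<V> \<Longrightarrow> \<V> \<subseteq> \<U> \<Longrightarrow> \<not> S n \<subseteq> \<Union>\<V>"
proof -
  define small where "small S \<longleftrightarrow> (\<exists>\<V>. countable \<V> \<and> \<V> \<subseteq> \<U> \<and> S \<subseteq> \<Union>\<V>)" for S
  have split: "\<exists>D\<in>\<D> n. \<not> small (S \<inter> D)" if "\<not> small S" "S \<subseteq> T" for S n
  proof (rule ccontr)
    assume "\<not> ?thesis"
    then have "\<exists>\<V>. countable \<V> \<and> \<V> \<subseteq> \<U> \<and> S \<inter> D \<subseteq> \<Union>\<V>" if "D \<in> \<D> n" for D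
      using that unfolding small_def by blast
    moreover have "S \<subseteq> \<Union>(\<D> n)"
      using \<open>S \<subseteq> T\<close> cover by blast
    ultimately have "small S"
      unfolding small_def by (rule countable_subcover_of_countable_pieces[OF cnt, rotated])
    with \<open>\<not> small S\<close> show False ..
  qed
  have "\<exists>S. \<forall>n. (\<not> small (S n) \<and> S n \<subseteq> T) \<and> (\<exists>D\<in>\<D> n. S (Suc n) = S n \<inter> D)"
  proof (rule dependent_nat_choice)
    show "\<exists>S. \<not> small S \<and> S \<subseteq> T"
      using big unfolding small_def by blast
    show "\<exists>S'. (\<not> small S' \<and> S' \<subseteq> T) \<and> (\<exists>D\<in>\<D> n. S' = S \<inter> D)"
      if "\<not> small S \<and> S \<subseteq> T" for S n
      using split[of S n] that by blast
  qed
  then obtain S where S: "\<And>n. \<not> small (S n)" "\<And>n. S n \<subseteq> T"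
    and S_step: "\<And>n. \<exists>D\<in>\<D> n. S (Suc n) = S n \<inter> D"
    by blast
  show thesis
  proof (rule that)
    show "decseq S"
      using S_step by (intro decseq_SucI) blast
    show "\<exists>D\<in>\<D> n. S (Suc n) \<subseteq> D" for n
      using S_step[of n] by blast
    show "\<not> S n \<subseteq> \<Union>\<V>" if "countable \<V>" "\<V> \<subseteq> \<U>" for n \<V>
      using S(1)[of n] that unfolding small_def by blast
    show "S n \<subseteq> T" for n
      by (rule S(2))
  qed
qed

lemma complete_sequence_countable_imp_Lindelof:
  assumes comp: "complete_sequence X \<D>" and cnt: "\<And>n. countable (\<D> n)"
  shows "Lindelof_space X"
  unfolding Lindelof_space_alt
proof (intro allI impI)
  fix \<U> assume \<U>: "(\<forall>U\<in>\<U>. openin X U) \<and> topspace X \<subseteq> \<Union>\<U>"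
  show "\<exists>\<V>. countable \<V> \<and> \<V> \<subseteq> \<U> \<and> topspace X \<subseteq> \<Union>\<V>"
  proof (rule ccontr)
    assume big: "\<nexists>\<V>. countable \<V> \<and> \<V> \<subseteq> \<U> \<and> topspace X \<subseteq> \<Union>\<V>"
    have cover: "topspace X \<subseteq> \<Union>(\<D> n)" for n
      using comp unfolding complete_sequence_def cover_of_def by simp
    obtain S where S: "decseq S" "\<And>n. S n \<subseteq> topspace X" "\<And>n. \<exists>D\<in>\<D> n. S (Suc n) \<subseteq> D"
      and S_big: "\<And>n \<V>. countable \<V> \<Longrightarrow> \<V> \<subseteq> \<U> \<Longrightarrow> \<not> S n \<subseteq> \<Union>\<V>"
      by (metis not_countably_covered_nested_sequence[where \<D> = \<D>, OF cnt cover big])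
    define \<N> where "\<N> = {topspace X - \<Union>\<V> | \<V>. finite \<V> \<and> \<V> \<subseteq> \<U>}"
    have \<N>I: "topspace X - \<Union>\<V> \<in> \<N>" if "finite \<V>" "\<V> \<subseteq> \<U>" for \<V>
      unfolding \<N>_def using that by blast
    have \<N>_nonempty: "\<N> \<noteq> {}"
      using \<N>I[of "{}"] by blast
    have \<N>_Int: "A \<inter> B \<in> \<N>" if "A \<in> \<N>" "B \<in> \<N>" for A B
    proof -
      obtain \<V> where "A = topspace X - \<Union>\<V>" "finite \<V>" "\<V> \<subseteq> \<U>"
        using \<open>A \<in> \<N>\<close> unfolding \<N>_def by blast
      moreover obtain \<W> where "B = topspace X - \<Union>\<W>" "finite \<W>" "\<W> \<subseteq> \<U>"
        using \<open>B \<in> \<N>\<close> unfolding \<N>_def by blast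
      ultimately show ?thesis
        using \<N>I[of "\<V> \<union> \<W>"] by (simp add: Diff_Un)
    qed
    have \<N>_meets: "S n \<inter> N \<noteq> {}" if "N \<in> \<N>" for n N
    proof
      assume empty: "S n \<inter> N = {}"
      obtain \<V> where \<V>: "N = topspace X - \<Union>\<V>" "finite \<V>" "\<V> \<subseteq> \<U>"
        using \<open>N \<in> \<N>\<close> unfolding \<N>_def by blast
      then have "S n \<subseteq> \<Union>\<V>"
        using S(2)[of n] empty by blast
      with S_big[OF countable_finite[OF \<V>(2)] \<V>(3)] show False ..
    qed
    from S \<N>_nonempty \<N>_Int \<N>_meets have "\<not> topspace X \<subseteq> \<Union>\<U>"
    proof (rule complete_sequence_nested_cluster[where S = S and \<N> = \<N>, OF comp])
      fix x assume "x \<in> topspace X"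
        and x: "\<And>U n N. openin X U \<Longrightarrow> x \<in> U \<Longrightarrow> N \<in> \<N> \<Longrightarrow> U \<inter> (S n \<inter> N) \<noteq> {}"
      show "\<not> topspace X \<subseteq> \<Union>\<U>"
      proof
        assume "topspace X \<subseteq> \<Union>\<U>"
        then obtain U where "U \<in> \<U>" "x \<in> U"
          using \<open>x \<in> topspace X\<close> by blast
        then show False
          using x[of U "topspace X - \<Union>{U}" 0] \<N>I[of "{U}"] \<U> by blast
      qed
    qed
    with \<U> show False
      by blast
  qed
qed

lemma Lindelof_continuous_map_fsigma_between:
  assumes X: "Lindelof_space X" and e: "continuous_map X C e" and C: "regular_space C"
    and G: "openin C G" "e ` topspace X \<subseteq> G"
  obtains W where "fsigma_in C W" "e ` topspace X \<subseteq> W" "W \<subseteq> G"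
proof -
  have "\<exists>U V. openin C U \<and> closedin C V \<and> e x \<in> U \<and> U \<subseteq> V \<and> V \<subseteq> G" if "x \<in> topspace X" for x
  proof -
    have "e x \<in> G"
      using G(2) that by blast
    then show ?thesis
      using C G(1) unfolding neighbourhood_base_of_closedin[symmetric] neighbourhood_base_of
      by simp
  qed
  then obtain U V where UV: "\<And>x. x \<in> topspace X \<Longrightarrow>
      openin C (U x) \<and> closedin C (V x) \<and> e x \<in> U x \<and> U x \<subseteq> V x \<and> V x \<subseteq> G"
    by metis
  define N where "N x = {z \<in> topspace X. e z \<in> U x}" for x
  have "\<forall>A\<in>N ` topspace X. openin X A"
    using UV openin_continuous_map_preimage[OF e] by (simp add: N_def)
  moreover have "topspace X \<subseteq> \<Union>(N ` topspace X)"
    using UV unfolding N_def by blast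
  ultimately obtain \<V> where "countable \<V> \<and> \<V> \<subseteq> N ` topspace X" "topspace X \<subseteq> \<Union>\<V>"
    using X unfolding Lindelof_space_alt by meson
  then obtain K where K: "countable K" "K \<subseteq> topspace X" and cover: "topspace X \<subseteq> (\<Union>x\<in>K. N x)"
    unfolding countable_subset_image by blast
  show thesis
  proof
    show "fsigma_in C (\<Union>x\<in>K. V x)"
      using K UV by (intro fsigma_in_Union) (auto intro: closed_imp_fsigma_in)
    show "e ` topspace X \<subseteq> (\<Union>x\<in>K. V x)"
      using cover K UV unfolding N_def by blast
    show "(\<Union>x\<in>K. V x) \<subseteq> G"
      using K UV by blast
  qed
qed

lemma embedding_map_image_Int_closure_of_image:
  assumes e: "embedding_map X C e" and F: "closedin X F"
  shows "e ` topspace X \<inter> C closure_of (e ` F) = e ` F"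
proof -
  have F_sub: "F \<subseteq> topspace X"
    using F by (rule closedin_subset)
  have "e ` topspace X \<inter> C closure_of (e ` F) = subtopology C (e ` topspace X) closure_of (e ` F)"
    using F_sub by (simp add: closure_of_subtopology Int_absorb1 image_mono)
  also have "\<dots> = e ` (X closure_of F)"
    using e F_sub unfolding embedding_map_def by (simp add: homeomorphic_map_closure_of)
  also have "\<dots> = e ` F"
    using F by (simp add: closure_of_closedin)
  finally show ?thesis .
qed

lemma complete_sequence_nested_closure_of_imp_image:
  assumes comp: "complete_sequence X \<D>" and e: "continuous_map X C e" and C: "Hausdorff_space C"
    and Q: "decseq Q" "\<And>n. Q n \<subseteq> topspace X" "\<And>n. \<exists>D\<in>\<D> n. Q (Suc n) \<subseteq> D"
    and y: "\<And>n. y \<in> C closure_of (e ` Q n)"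
  shows "y \<in> e ` topspace X"
proof -
  have yC: "y \<in> topspace C"
    using y[of 0] closure_of_subset_topspace by fast
  define \<N> where "\<N> = {topspace X \<inter> e -` U | U. openin C U \<and> y \<in> U}"
  have \<N>I: "topspace X \<inter> e -` U \<in> \<N>" if "openin C U" "y \<in> U" for U
    unfolding \<N>_def using that by blast
  have \<N>_nonempty: "\<N> \<noteq> {}"
    using \<N>I[OF openin_topspace yC] by blast
  have \<N>_Int: "A \<inter> B \<in> \<N>" if "A \<in> \<N>" "B \<in> \<N>" for A B
  proof -
    obtain U where "openin C U" "y \<in> U" "A = topspace X \<inter> e -` U"
      using \<open>A \<in> \<N>\<close> unfolding \<N>_def by blast
    moreover obtain V where "openin C V" "y \<in> V" "B = topspace X \<inter> e -` V"
      using \<open>B \<in> \<N>\<close> unfolding \<N>_def by blast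
    ultimately show ?thesis
      using \<N>I[of "U \<inter> V"] by (simp add: openin_Int Int_assoc Int_left_commute)
  qed
  have \<N>_meets: "Q n \<inter> N \<noteq> {}" if "N \<in> \<N>" for n N
  proof -
    obtain U where U: "openin C U" "y \<in> U" "N = topspace X \<inter> e -` U"
      using \<open>N \<in> \<N>\<close> unfolding \<N>_def by blast
    then obtain z where "z \<in> Q n" "e z \<in> U"
      using y[of n] by (auto simp: in_closure_of)
    then show ?thesis
      using Q(2) U(3) by blast
  qed
  from Q \<N>_nonempty \<N>_Int \<N>_meets show ?thesis
  proof (rule complete_sequence_nested_cluster[where S = Q and \<N> = \<N>, OF comp])
    fix x assume x: "x \<in> topspace X"
      and cluster: "\<And>U n N. openin X U \<Longrightarrow> x \<in> U \<Longrightarrow> N \<in> \<N> \<Longrightarrow> U \<inter> (Q n \<inter> N) \<noteq> {}"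
    have "e x = y"
    proof (rule ccontr)
      assume "e x \<noteq> y"
      moreover have "e x \<in> topspace C"
        using e x continuous_map_image_subset_topspace by blast
      ultimately obtain U V where UV: "openin C U" "openin C V" "e x \<in> U" "y \<in> V" "disjnt U V"
        using C yC unfolding Hausdorff_space_def by blast
      have "openin X {z \<in> topspace X. e z \<in> U}"
        using e UV(1) by (rule openin_continuous_map_preimage)
      then have "{z \<in> topspace X. e z \<in> U} \<inter> (Q 0 \<inter> (topspace X \<inter> e -` V)) \<noteq> {}"
        using cluster x UV(3) \<N>I[OF UV(2,4)] by blast
      then show False
        using UV(5) by (auto simp: disjnt_def)
    qed
    then show ?thesis
      using x by blast
  qed
qed

lemma complete_sequence_point_of_refining_closures:
  assumes comp: "complete_sequence X \<D>" and disj: "\<And>n. pairwise disjnt (\<D> n)"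
    and e: "continuous_map X C e" and C: "Hausdorff_space C"
    and \<P>: "\<And>n. cover_of X (\<P> n)" "\<And>n P i. P \<in> \<P> n \<Longrightarrow> i < n \<Longrightarrow> \<exists>D\<in>\<D> i. P \<subseteq> D"
    and y: "\<And>n. \<exists>P\<in>\<P> n. y \<in> C closure_of (e ` P)"
    and meet: "\<And>n m P P'. \<lbrakk>P \<in> \<P> n; P' \<in> \<P> m; y \<in> C closure_of (e ` P); y \<in> C closure_of (e ` P')\<rbrakk>
                 \<Longrightarrow> P \<inter> P' \<noteq> {}"
  shows "y \<in> e ` topspace X"
proof -
  obtain P where P: "\<And>n. P n \<in> \<P> n" "\<And>n. y \<in> C closure_of (e ` P n)"
    using y by (metis (full_types))
  have "\<exists>D\<in>\<D> i. P (Suc i) \<subseteq> D" for i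
    using \<P>(2)[OF P(1) lessI] .
  then obtain D where D: "\<And>i. D i \<in> \<D> i" "\<And>i. P (Suc i) \<subseteq> D i"
    by (metis (full_types))
  \<comment> \<open>\<open>P n\<close> meets \<open>P (Suc i)\<close>, so disjointness of \<open>\<D> i\<close> puts both into the same member \<open>D i\<close>.\<close>
  have P_sub_D: "P n \<subseteq> D i" if lt: "i < n" for n i
  proof -
    obtain D' where D': "D' \<in> \<D> i" "P n \<subseteq> D'"
      using \<P>(2)[OF P(1) lt] by blast
    have "P n \<inter> P (Suc i) \<noteq> {}"
      using meet[OF P(1) P(1) P(2) P(2)] .
    then have "\<not> disjnt D' (D i)"
      using D'(2) D(2)[of i] unfolding disjnt_def by blast
    then have "D' = D i"
      using disj[of i] D'(1) D(1)[of i] unfolding pairwise_def by blast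
    then show ?thesis
      using D'(2) by simp
  qed
  define Q where "Q n = topspace X \<inter> (\<Inter>i<n. D i)" for n
  show ?thesis
  proof (rule complete_sequence_nested_closure_of_imp_image[OF comp e C])
    show "decseq Q"
      unfolding decseq_def Q_def by fastforce
    show "Q n \<subseteq> topspace X" for n
      by (simp add: Q_def)
    show "\<exists>D'\<in>\<D> n. Q (Suc n) \<subseteq> D'" for n
      using D(1)[of n] unfolding Q_def by blast
    show "y \<in> C closure_of (e ` Q n)" for n
    proof -
      have "P n \<subseteq> topspace X"
        using \<P>(1)[of n] P(1)[of n] unfolding cover_of_def by blast
      then have "P n \<subseteq> Q n"
        unfolding Q_def using P_sub_D by blast
      then have "C closure_of (e ` P n) \<subseteq> C closure_of (e ` Q n)"
        by (intro closure_of_mono image_mono)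
      then show ?thesis
        using P(2) by blast
    qed
  qed
qed

lemma fsigma_cover_closed_refinement:
  fixes \<D> :: "'a set set"
  assumes cover: "cover_of X \<D>" and cnt: "countable \<D>" and fsigma: "\<And>D. D \<in> \<D> \<Longrightarrow> fsigma_in X D"
  shows "\<exists>\<E>. countable \<E> \<and> cover_of X \<E> \<and> (\<forall>E\<in>\<E>. closedin X E \<and> (\<exists>D\<in>\<D>. E \<subseteq> D))"
proof -
  have "\<forall>D\<in>\<D>. \<exists>F :: nat \<Rightarrow> 'a set. (\<forall>k. closedin X (F k)) \<and> \<Union>(range F) = D"
    using fsigma unfolding fsigma_in_ascending by blast
  then obtain F where F: "\<forall>D\<in>\<D>. (\<forall>k::nat. closedin X (F D k)) \<and> \<Union>(range (F D)) = D"
    by (rule bchoice[elim_format]) blast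
  define \<E> where "\<E> = (\<Union>D\<in>\<D>. range (F D))"
  have "countable \<E>"
    unfolding \<E>_def using cnt by (intro countable_UN) auto
  moreover have \<E>_closed_refines: "closedin X E \<and> (\<exists>D\<in>\<D>. E \<subseteq> D)" if "E \<in> \<E>" for E
  proof -
    obtain D k where D: "D \<in> \<D>" "E = F D k"
      using \<open>E \<in> \<E>\<close> unfolding \<E>_def by blast
    have "F D k \<subseteq> \<Union>(range (F D))"
      by blast
    then show ?thesis
      using bspec[OF F D(1)] D by auto
  qed
  moreover have "cover_of X \<E>"
    unfolding cover_of_def
  proof
    show "\<forall>E\<in>\<E>. E \<subseteq> topspace X"
      using \<E>_closed_refines closedin_subset by blast
    have "\<Union>\<E> = (\<Union>D\<in>\<D>. \<Union>(range (F D)))"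
      unfolding \<E>_def by blast
    also have "\<dots> = (\<Union>D\<in>\<D>. D)"
      using F by (intro SUP_cong) auto
    finally show "\<Union>\<E> = topspace X"
      using cover unfolding cover_of_def by simp
  qed
  ultimately show ?thesis
    by blast
qed

lemma closed_covers_finite_Int_refinement:
  fixes \<E> :: "nat \<Rightarrow> 'a set set"
  assumes cnt: "\<And>i. countable (\<E> i)" and cover: "\<And>i. cover_of X (\<E> i)"
    and closed: "\<And>i E. E \<in> \<E> i \<Longrightarrow> closedin X E"
  obtains \<P> where "\<And>n. countable (\<P> n)" "\<And>n. cover_of X (\<P> n)" "\<And>n P. P \<in> \<P> n \<Longrightarrow> closedin X P"
    "\<And>n P i. P \<in> \<P> n \<Longrightarrow> i < n \<Longrightarrow> \<exists>E\<in>\<E> i. P \<subseteq> E"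
proof
  define \<P> where "\<P> n = (\<lambda>E. topspace X \<inter> (\<Inter>i<n. E i)) ` Pi\<^sub>E {..<n} \<E>" for n
  show "countable (\<P> n)" for n
    unfolding \<P>_def by (intro countable_image countable_PiE cnt) auto
  show "closedin X P" if P: "P \<in> \<P> n" for n P
  proof -
    obtain E where E: "E \<in> Pi\<^sub>E {..<n} \<E>" and "P = topspace X \<inter> (\<Inter>i<n. E i)"
      using P unfolding \<P>_def by blast
    then have "P = \<Inter>(insert (topspace X) (E ` {..<n}))"
      by simp
    moreover have "closedin X (\<Inter>(insert (topspace X) (E ` {..<n})))"
      using E closed by (intro closedin_Inter) auto
    ultimately show ?thesis
      by simp
  qed
  show "cover_of X (\<P> n)" for n
    unfolding cover_of_def
  proof (intro conjI equalityI subsetI)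
    show "\<forall>P\<in>\<P> n. P \<subseteq> topspace X"
      unfolding \<P>_def by blast
    then show "x \<in> topspace X" if "x \<in> \<Union>(\<P> n)" for x
      using that by blast
    show "x \<in> \<Union>(\<P> n)" if x: "x \<in> topspace X" for x
    proof -
      have "x \<in> \<Union>(\<E> i)" for i
        using cover[of i] x unfolding cover_of_def by simp
      then have "\<exists>E\<in>\<E> i. x \<in> E" for i
        by blast
      then obtain E where E: "\<And>i. E i \<in> \<E> i \<and> x \<in> E i"
        by metis
      then have "restrict E {..<n} \<in> Pi\<^sub>E {..<n} \<E>"
        by simp
      moreover have "x \<in> topspace X \<inter> (\<Inter>i<n. restrict E {..<n} i)"
        using x E by simp
      ultimately show "x \<in> \<Union>(\<P> n)"
        unfolding \<P>_def by blast
    qed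
  qed
  show "\<exists>E\<in>\<E> i. P \<subseteq> E" if "P \<in> \<P> n" "i < n" for n P i
  proof -
    obtain E where "E \<in> Pi\<^sub>E {..<n} \<E>" "P = topspace X \<inter> (\<Inter>i<n. E i)"
      using \<open>P \<in> \<P> n\<close> unfolding \<P>_def by blast
    then show ?thesis
      using \<open>i < n\<close> by auto
  qed
qed

lemma countable_fsigma_covers_closed_refinement:
  fixes \<D> :: "nat \<Rightarrow> 'a set set"
  assumes cover: "\<And>n. cover_of X (\<D> n)" and cnt: "\<And>n. countable (\<D> n)"
    and fsigma: "\<And>n D. D \<in> \<D> n \<Longrightarrow> fsigma_in X D"
  obtains \<P> where "\<And>n. countable (\<P> n)" "\<And>n. cover_of X (\<P> n)" "\<And>n P. P \<in> \<P> n \<Longrightarrow> closedin X P"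
    "\<And>n P i. P \<in> \<P> n \<Longrightarrow> i < n \<Longrightarrow> \<exists>D\<in>\<D> i. P \<subseteq> D"
proof -
  have "\<forall>i. \<exists>\<E>. countable \<E> \<and> cover_of X \<E> \<and> (\<forall>E\<in>\<E>. closedin X E \<and> (\<exists>D\<in>\<D> i. E \<subseteq> D))"
    using fsigma_cover_closed_refinement[OF cover cnt] fsigma by blast
  then have "\<exists>\<E>. \<forall>i. countable (\<E> i) \<and> cover_of X (\<E> i) \<and> (\<forall>E\<in>\<E> i. closedin X E \<and> (\<exists>D\<in>\<D> i. E \<subseteq> D))"
    by (rule choice)
  then obtain \<E> where
    "\<forall>i. countable (\<E> i) \<and> cover_of X (\<E> i) \<and> (\<forall>E\<in>\<E> i. closedin X E \<and> (\<exists>D\<in>\<D> i. E \<subseteq> D))"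
    ..
  then have \<E>: "\<And>i. countable (\<E> i)" "\<And>i. cover_of X (\<E> i)"
    "\<And>i E. E \<in> \<E> i \<Longrightarrow> closedin X E" "\<And>i E. E \<in> \<E> i \<Longrightarrow> \<exists>D\<in>\<D> i. E \<subseteq> D"
    by simp_all
  from \<E>(1-3) show thesis
  proof (rule closed_covers_finite_Int_refinement)
    fix \<P> :: "nat \<Rightarrow> 'a set set"
    assume \<P>: "\<And>n. countable (\<P> n)" "\<And>n. cover_of X (\<P> n)" "\<And>n P. P \<in> \<P> n \<Longrightarrow> closedin X P"
      "\<And>n P i. P \<in> \<P> n \<Longrightarrow> i < n \<Longrightarrow> \<exists>E\<in>\<E> i. P \<subseteq> E"
    show thesis
    proof (rule that[OF \<P>(1-3)])
      show "\<exists>D\<in>\<D> i. P \<subseteq> D" if P: "P \<in> \<P> n" "i < n" for n P i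
      proof -
        obtain E where "E \<in> \<E> i" "P \<subseteq> E"
          using \<P>(4)[OF P] by blast
        moreover obtain D where "D \<in> \<D> i" "E \<subseteq> D"
          using \<E>(4)[OF \<open>E \<in> \<E> i\<close>] by blast
        ultimately show ?thesis
          by blast
      qed
    qed
  qed
qed

lemma fsigma_delta_in_Inter:
  assumes "countable \<A>" "\<A> \<noteq> {}" "\<And>A. A \<in> \<A> \<Longrightarrow> fsigma_in X A"
  shows "fsigma_delta_in X (\<Inter>\<A>)"
  unfolding fsigma_delta_in_def
proof (intro exI[of _ "from_nat_into \<A>"] conjI allI)
  show "fsigma_in X (from_nat_into \<A> n)" for n
    by (rule assms(3)[OF from_nat_into[OF assms(2)]])
  show "(\<Inter>n. from_nat_into \<A> n) = \<Inter>\<A>"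
    using assms(1,2) by simp
qed

lemma embedding_map_imp_continuous_map:
  "embedding_map X C e \<Longrightarrow> continuous_map X C e"
  unfolding embedding_map_def
  using continuous_map_in_subtopology homeomorphic_imp_continuous_map by blast

lemma Lindelof_embedding_fsigma_separating_family:
  assumes X: "Lindelof_space X" and emb: "embedding_map X C e" and C: "regular_space C"
    and \<K>: "countable \<K>" "\<And>K. K \<in> \<K> \<Longrightarrow> closedin X K"
  obtains \<W> where "countable \<W>" "\<And>W. W \<in> \<W> \<Longrightarrow> fsigma_in C W \<and> e ` topspace X \<subseteq> W"
    "\<And>K K'. \<lbrakk>K \<in> \<K>; K' \<in> \<K>; K \<inter> K' = {}\<rbrakk>
       \<Longrightarrow> \<exists>W\<in>\<W>. W \<inter> (C closure_of (e ` K) \<inter> C closure_of (e ` K')) = {}"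
proof -
  have e: "continuous_map X C e"
    using emb by (rule embedding_map_imp_continuous_map)
  have inj: "inj_on e (topspace X)"
    using emb unfolding embedding_map_def by (rule homeomorphic_imp_injective_map)
  define cl where "cl K = C closure_of (e ` K)" for K
  define Inc where "Inc = {(K, K'). K \<in> \<K> \<and> K' \<in> \<K> \<and> K \<inter> K' = {}}"
  have "\<exists>W. fsigma_in C W \<and> e ` topspace X \<subseteq> W \<and> W \<inter> (cl (fst p) \<inter> cl (snd p)) = {}"
    if "p \<in> Inc" for p
  proof -
    obtain K K' where p: "p = (K, K')" and K: "closedin X K" "closedin X K'" "K \<inter> K' = {}"
      using \<open>p \<in> Inc\<close> \<K>(2) unfolding Inc_def by blast
    have "e ` topspace X \<inter> (cl K \<inter> cl K') = e ` K \<inter> e ` K'"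
      using embedding_map_image_Int_closure_of_image[OF emb K(1)]
        embedding_map_image_Int_closure_of_image[OF emb K(2)]
      unfolding cl_def by blast
    also have "\<dots> = e ` (K \<inter> K')"
      using inj K(1,2) by (simp add: inj_on_image_Int closedin_subset)
    finally have "e ` topspace X \<subseteq> topspace C - (cl K \<inter> cl K')"
      using K(3) continuous_map_image_subset_topspace[OF e] by blast
    moreover have "openin C (topspace C - (cl K \<inter> cl K'))"
      unfolding cl_def by (intro openin_diff openin_topspace closedin_Int closedin_closure_of)
    ultimately obtain W where "fsigma_in C W" "e ` topspace X \<subseteq> W" "W \<subseteq> topspace C - (cl K \<inter> cl K')"
      by (metis Lindelof_continuous_map_fsigma_between[OF X e C])
    then show ?thesis
      using p by auto
  qed
  then obtain W where W: "\<forall>p\<in>Inc. fsigma_in C (W p) \<and> e ` topspace X \<subseteq> W p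
      \<and> W p \<inter> (cl (fst p) \<inter> cl (snd p)) = {}"
    by (metis bchoice)
  show thesis
  proof
    have "Inc \<subseteq> \<K> \<times> \<K>"
      unfolding Inc_def by blast
    then show "countable (W ` Inc)"
      using \<K>(1) by (blast intro: countable_subset)
    show "fsigma_in C V \<and> e ` topspace X \<subseteq> V" if "V \<in> W ` Inc" for V
      using that W by blast
    show "\<exists>V\<in>W ` Inc. V \<inter> (C closure_of (e ` K) \<inter> C closure_of (e ` K')) = {}"
      if "K \<in> \<K>" "K' \<in> \<K>" "K \<inter> K' = {}" for K K'
    proof -
      have "(K, K') \<in> Inc"
        using that unfolding Inc_def by blast
      then show ?thesis
        using bspec[OF W \<open>(K, K') \<in> Inc\<close>] unfolding cl_def by force
    qed
  qed
qed

lemma continuous_map_image_subset_Union_closure_of: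
  assumes e: "continuous_map X C e" and \<P>: "cover_of X \<P>"
  shows "e ` topspace X \<subseteq> (\<Union>P\<in>\<P>. C closure_of (e ` P))"
proof
  fix y assume "y \<in> e ` topspace X"
  then obtain x where x: "x \<in> topspace X" "y = e x"
    by blast
  then have "x \<in> \<Union>\<P>"
    using \<P> unfolding cover_of_def by simp
  then obtain P where P: "P \<in> \<P>" "x \<in> P"
    by blast
  then have "P \<subseteq> topspace X"
    using \<P> unfolding cover_of_def by simp
  then have "e ` P \<subseteq> topspace C"
    using continuous_map_image_subset_topspace[OF e] by blast
  then have "y \<in> C closure_of (e ` P)"
    using closure_of_subset P(2) x(2) by blast
  then show "y \<in> (\<Union>P\<in>\<P>. C closure_of (e ` P))"
    using P(1) by blast
qed

lemma compactification_fsigma_delta_of_closed_refinement: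
  assumes comp: "complete_sequence X \<D>" and cnt: "\<And>n. countable (\<D> n)"
    and disj: "\<And>n. pairwise disjnt (\<D> n)" and c: "compactification X C e"
    and \<P>: "\<And>n. countable (\<P> n)" "\<And>n. cover_of X (\<P> n)" "\<And>n P. P \<in> \<P> n \<Longrightarrow> closedin X P"
      "\<And>n P i. P \<in> \<P> n \<Longrightarrow> i < n \<Longrightarrow> \<exists>D\<in>\<D> i. P \<subseteq> D"
  shows "fsigma_delta_in C (e ` topspace X)"
proof -
  have emb: "embedding_map X C e" and C: "Hausdorff_space C" "regular_space C"
    using c by (auto simp: compactification_def compact_Hausdorff_imp_regular_space)
  have e: "continuous_map X C e"
    using emb by (rule embedding_map_imp_continuous_map)
  have X: "Lindelof_space X"
    using comp cnt by (rule complete_sequence_countable_imp_Lindelof)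
  have \<K>: "countable (\<Union>n. \<P> n)" "\<And>K. K \<in> (\<Union>n. \<P> n) \<Longrightarrow> closedin X K"
    using \<P>(1,3) by auto
  obtain \<W> where \<W>: "countable \<W>" "\<And>W. W \<in> \<W> \<Longrightarrow> fsigma_in C W \<and> e ` topspace X \<subseteq> W"
    and separating: "\<And>K K'. \<lbrakk>K \<in> (\<Union>n. \<P> n); K' \<in> (\<Union>n. \<P> n); K \<inter> K' = {}\<rbrakk>
       \<Longrightarrow> \<exists>W\<in>\<W>. W \<inter> (C closure_of (e ` K) \<inter> C closure_of (e ` K')) = {}"
    by (metis Lindelof_embedding_fsigma_separating_family[OF X emb C(2) \<K>])
  define A where "A n = (\<Union>P\<in>\<P> n. C closure_of (e ` P))" for n
  define \<A> where "\<A> = range A \<union> \<W>"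
  have "countable \<A>"
    unfolding \<A>_def using \<W>(1) by blast
  moreover have "\<A> \<noteq> {}"
    unfolding \<A>_def by blast
  moreover have "fsigma_in C B" if "B \<in> \<A>" for B
  proof -
    have "fsigma_in C (A n)" for n
      unfolding A_def using \<P>(1)
      by (intro fsigma_in_Union countable_image) (auto intro: closed_imp_fsigma_in)
    then show ?thesis
      using that \<W>(2) unfolding \<A>_def by blast
  qed
  moreover have "\<Inter>\<A> = e ` topspace X"
  proof
    have "e ` topspace X \<subseteq> A n" for n
      unfolding A_def by (rule continuous_map_image_subset_Union_closure_of[OF e \<P>(2)])
    then show "e ` topspace X \<subseteq> \<Inter>\<A>"
      using \<W>(2) unfolding \<A>_def by blast
    show "\<Inter>\<A> \<subseteq> e ` topspace X"
    proof
      fix y assume y: "y \<in> \<Inter>\<A>"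
      show "y \<in> e ` topspace X"
      proof (rule complete_sequence_point_of_refining_closures[OF comp disj e C(1) \<P>(2,4)])
        show "\<exists>P\<in>\<P> n. y \<in> C closure_of (e ` P)" for n
        proof -
          have "y \<in> A n"
            using y unfolding \<A>_def by blast
          then show ?thesis
            unfolding A_def by blast
        qed
        show "P \<inter> P' \<noteq> {}"
          if PP': "P \<in> \<P> n" "P' \<in> \<P> m" "y \<in> C closure_of (e ` P)" "y \<in> C closure_of (e ` P')"
          for n m P P'
        proof
          assume "P \<inter> P' = {}"
          then obtain W where "W \<in> \<W>" "W \<inter> (C closure_of (e ` P) \<inter> C closure_of (e ` P')) = {}"
            using separating PP'(1,2) by blast
          moreover have "y \<in> W"
            using y \<open>W \<in> \<W>\<close> unfolding \<A>_def by blast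
          ultimately show False
            using PP'(3,4) by blast
        qed
      qed
    qed
  qed
  ultimately show ?thesis
    using fsigma_delta_in_Inter[of \<A> C] by simp
qed

theorem proposition4p5:
  fixes X :: "'a topology" and \<D> :: "nat \<Rightarrow> 'a set set"
  assumes "tychonoff_space X"
    and "complete_sequence X \<D>"
    and "\<And>n. countable (\<D> n)"
    and "\<And>n. pairwise disjnt (\<D> n)"
    and "\<And>n D. D \<in> \<D> n \<Longrightarrow> fsigma_in X D"
  shows "\<forall>(C :: 'b topology) (e :: 'a \<Rightarrow> 'b).
           compactification X C e \<longrightarrow> fsigma_delta_in C (e ` topspace X)"
  \<comment> \<open>Being Tychonoff only ensures that compactifications exist.\<close>
proof (intro allI impI)
  fix C :: "'b topology" and e :: "'a \<Rightarrow> 'b"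
  assume c: "compactification X C e"
  have cover: "cover_of X (\<D> n)" for n
    using assms(2) by (simp add: complete_sequence_def)
  show "fsigma_delta_in C (e ` topspace X)"
    using cover assms(3,5)
  proof (rule countable_fsigma_covers_closed_refinement[where \<D> = \<D>])
    fix \<P> :: "nat \<Rightarrow> 'a set set"
    assume "\<And>n. countable (\<P> n)" "\<And>n. cover_of X (\<P> n)" "\<And>n P. P \<in> \<P> n \<Longrightarrow> closedin X P"
      "\<And>n P i. P \<in> \<P> n \<Longrightarrow> i < n \<Longrightarrow> \<exists>D\<in>\<D> i. P \<subseteq> D"
    then show ?thesis
      by (rule compactification_fsigma_delta_of_closed_refinement[OF assms(2,3,4) c])
  qed
qed

end
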